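(* Let $M$ be a finite rectangular monoid generated by regular elements, and let $e,f\in E(M)$. (1) If $MeM$ and $MfM$ are incomparable, then every $m\in\mathrm{AIrr}_{\mathscr K(M)}(e,f)=\mathrm{Irr}_{\mathscr K(M)}(e,f)$ is of the form $ba$ with $Ma=Me$ and $bM=fM$. (2) If $MeM\subsetneq MfM$, then $\mathrm{AIrr}_{\mathscr K(M)}(e,f)=\{m\in fMe: Mm=Me\}$. (3) If $MeM\supsetneq MfM$, then $\mathrm{AIrr}_{\mathscr K(M)}(e,f)=\{m\in fMe: mM=fM\}$. (4) $\mathrm{AIrr}_{\mathscr K(M)}(e,e)=G_e$.
   Context: $E(M)$ idempotents; $M$ rectangular: each $\{g\in E(M): MgM=MeM\}$ closed under multiplication. $m$ is regular if $m\in mMm$. The Karoubi envelope $\mathscr K(M)$ has objects $E(M)$, morphisms $e\to f$ the elements of $fMe$, composition the product. A morphism $m$ is almost irreducible if whenever $m=gh$ in $\mathscr K(M)$, $h$ is a split monomorphism or $g$ is a split epimorphism; irreducible if in addition it is neither a split monomorphism nor a split epimorphism. $\mathrm{AIrr}_{\mathscr K(M)}(e,f)$, $\mathrm{Irr}_{\mathscr K(M)}(e,f)$ denote these sets. $G_e$ is the group of units of $eMe$. *)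

theory Defs
  imports Main
begin

text \<open>A finite monoid is modelled as a finite type of class monoid_mult; M = UNIV.\<close>

definition idems :: "'a::monoid_mult set" where
  "idems = {e. e * e = e}"

definition two_ideal :: "'a::monoid_mult \<Rightarrow> 'a set" where
  "two_ideal x = {a * x * b | a b. True}"

definition left_ideal :: "'a::monoid_mult \<Rightarrow> 'a set" where
  "left_ideal x = {a * x | a. True}"

definition right_ideal :: "'a::monoid_mult \<Rightarrow> 'a set" where
  "right_ideal x = {x * b | b. True}"

definition rectangular :: "'a::monoid_mult itself \<Rightarrow> bool" where
  "rectangular _ \<longleftrightarrow> (\<forall>e\<in>(idems::'a set). \<forall>g h.
      g \<in> idems \<and> two_ideal g = two_ideal e \<and> h \<in> idems \<and> two_ideal h = two_ideal e
      \<longrightarrow> g * h \<in> idems \<and> two_ideal (g * h) = two_ideal e)"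

definition regular :: "'a::monoid_mult \<Rightarrow> bool" where
  "regular m \<longleftrightarrow> (\<exists>x. m = m * x * m)"

definition generated_by_regular :: "'a::monoid_mult itself \<Rightarrow> bool" where
  "generated_by_regular _ \<longleftrightarrow>
     (\<forall>m::'a. \<exists>xs. (\<forall>x\<in>set xs. regular x) \<and> m = prod_list xs)"

text \<open>Karoubi envelope: hom e f = fMe; identity on e is e.\<close>
definition khom :: "'a::monoid_mult \<Rightarrow> 'a \<Rightarrow> 'a set" where
  "khom e f = {f * x * e | x. True}"

definition split_mono :: "'a::monoid_mult \<Rightarrow> 'a \<Rightarrow> 'a \<Rightarrow> bool" where
  "split_mono e f h \<longleftrightarrow> (\<exists>r\<in>khom f e. r * h = e)"

definition split_epi :: "'a::monoid_mult \<Rightarrow> 'a \<Rightarrow> 'a \<Rightarrow> bool" where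
  "split_epi e f g \<longleftrightarrow> (\<exists>s\<in>khom f e. g * s = f)"

definition AIrr :: "'a::monoid_mult \<Rightarrow> 'a \<Rightarrow> 'a set" where
  "AIrr e f = {m \<in> khom e f. \<forall>e'\<in>idems. \<forall>h\<in>khom e e'. \<forall>g\<in>khom e' f.
       m = g * h \<longrightarrow> split_mono e e' h \<or> split_epi e' f g}"

definition Irr :: "'a::monoid_mult \<Rightarrow> 'a \<Rightarrow> 'a set" where
  "Irr e f = {m \<in> AIrr e f. \<not> split_mono e f m \<and> \<not> split_epi e f m}"

definition unit_group :: "'a::monoid_mult \<Rightarrow> 'a set" where
  "unit_group e = {u \<in> khom e e. \<exists>v\<in>khom e e. u * v = e \<and> v * u = e}"

end

theory Submission
  imports Defs
begin

text \<open>
  Write an almost irreducible \<open>m \<in> fMe\<close> as a product \<open>f x\<^sub>1 \<cdots> x\<^sub>n e\<close> of regular elements.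
  Inserting the idempotent \<open>x\<^sub>i y\<^sub>i\<close> (with \<open>x\<^sub>i y\<^sub>i x\<^sub>i = x\<^sub>i\<close>) factors \<open>m\<close> through it;
  as long as the right factor is not a split mono, the left factor is a split epi, so sweeping
  from left to right yields \<open>m = b a\<close> with \<open>bM = fM\<close> and \<open>Ma = Me\<close>.  This settles the
  incomparable case.  When \<open>MeM \<subseteq> MfM\<close>, the idempotents \<open>p = sb\<close> and \<open>q = ar\<close> built from
  one-sided inverses of \<open>b\<close> and \<open>a\<close> satisfy \<open>q \<in> MpM\<close>; in a finite rectangular monoid this
  forces \<open>q \<in> qpMpq\<close>, which produces a left inverse of \<open>m\<close>.  Dually for \<open>MfM \<subseteq> MeM\<close>.
  Finally, in the finite local monoid \<open>eMe\<close> a left inverse is a two-sided one.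
\<close>

lemma mem_two_ideal_iff: "z \<in> two_ideal x \<longleftrightarrow> (\<exists>a b. z = a * x * b)"
  unfolding two_ideal_def by blast

lemma two_ideal_subset_iff:
  "two_ideal (a::'a::monoid_mult) \<subseteq> two_ideal b \<longleftrightarrow> a \<in> two_ideal b"
proof
  assume "two_ideal a \<subseteq> two_ideal b"
  moreover have "a \<in> two_ideal a"
    unfolding mem_two_ideal_iff by (metis mult_1_left mult_1_right)
  ultimately show "a \<in> two_ideal b" by blast
next
  assume "a \<in> two_ideal b"
  then obtain c d where a: "a = c * b * d" by (auto simp: mem_two_ideal_iff)
  show "two_ideal a \<subseteq> two_ideal b"
  proof
    fix z assume "z \<in> two_ideal a"
    then obtain c' d' where "z = c' * a * d'" by (auto simp: mem_two_ideal_iff)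
    then have "z = (c' * c) * b * (d * d')" by (simp add: a mult.assoc)
    then show "z \<in> two_ideal b" by (auto simp: mem_two_ideal_iff)
  qed
qed

lemma mem_left_ideal_iff: "z \<in> left_ideal x \<longleftrightarrow> (\<exists>c. z = c * x)"
  unfolding left_ideal_def by blast

lemma mem_right_ideal_iff: "z \<in> right_ideal x \<longleftrightarrow> (\<exists>c. z = x * c)"
  unfolding right_ideal_def by blast

lemma left_ideal_subset_iff:
  "left_ideal (a::'a::monoid_mult) \<subseteq> left_ideal b \<longleftrightarrow> a \<in> left_ideal b"
proof
  assume "left_ideal a \<subseteq> left_ideal b"
  moreover have "a \<in> left_ideal a" unfolding mem_left_ideal_iff by (metis mult_1_left)
  ultimately show "a \<in> left_ideal b" by blast
next
  assume "a \<in> left_ideal b"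
  then obtain c where a: "a = c * b" by (auto simp: mem_left_ideal_iff)
  show "left_ideal a \<subseteq> left_ideal b"
  proof
    fix z assume "z \<in> left_ideal a"
    then obtain d where "z = d * a" by (auto simp: mem_left_ideal_iff)
    then have "z = (d * c) * b" by (simp add: a mult.assoc)
    then show "z \<in> left_ideal b" by (auto simp: mem_left_ideal_iff)
  qed
qed

lemma right_ideal_subset_iff:
  "right_ideal (a::'a::monoid_mult) \<subseteq> right_ideal b \<longleftrightarrow> a \<in> right_ideal b"
proof
  assume "right_ideal a \<subseteq> right_ideal b"
  moreover have "a \<in> right_ideal a" unfolding mem_right_ideal_iff by (metis mult_1_right)
  ultimately show "a \<in> right_ideal b" by blast
next
  assume "a \<in> right_ideal b"
  then obtain c where a: "a = b * c" by (auto simp: mem_right_ideal_iff)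
  show "right_ideal a \<subseteq> right_ideal b"
  proof
    fix z assume "z \<in> right_ideal a"
    then obtain d where "z = a * d" by (auto simp: mem_right_ideal_iff)
    then have "z = b * (c * d)" by (simp add: a mult.assoc)
    then show "z \<in> right_ideal b" by (auto simp: mem_right_ideal_iff)
  qed
qed

lemma left_ideal_eq_iff:
  assumes "(e::'a::monoid_mult) * e = e"
  shows "left_ideal a = left_ideal e \<longleftrightarrow> a * e = a \<and> (\<exists>r. r * a = e)"
proof -
  have "a \<in> left_ideal e \<longleftrightarrow> a * e = a"
    unfolding mem_left_ideal_iff using assms by (metis mult.assoc)
  moreover have "e \<in> left_ideal a \<longleftrightarrow> (\<exists>r. r * a = e)"
    unfolding mem_left_ideal_iff by auto
  ultimately show ?thesis
    unfolding set_eq_subset left_ideal_subset_iff by blast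
qed

lemma right_ideal_eq_iff:
  assumes "(f::'a::monoid_mult) * f = f"
  shows "right_ideal b = right_ideal f \<longleftrightarrow> f * b = b \<and> (\<exists>s. b * s = f)"
proof -
  have "b \<in> right_ideal f \<longleftrightarrow> f * b = b"
    unfolding mem_right_ideal_iff using assms by (metis mult.assoc)
  moreover have "f \<in> right_ideal b \<longleftrightarrow> (\<exists>s. b * s = f)"
    unfolding mem_right_ideal_iff by auto
  ultimately show ?thesis
    unfolding set_eq_subset right_ideal_subset_iff by blast
qed

lemma khom_iff:
  assumes "(e::'a::monoid_mult) * e = e" and "f * f = f"
  shows "z \<in> khom e f \<longleftrightarrow> f * z = z \<and> z * e = z"
proof
  assume "z \<in> khom e f"
  then obtain x where "z = f * x * e" unfolding khom_def by blast
  then show "f * z = z \<and> z * e = z" using assms by (simp add: mult.assoc[symmetric]) (simp add: mult.assoc)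
next
  assume "f * z = z \<and> z * e = z"
  then have "z = f * z * e" by simp
  then show "z \<in> khom e f" unfolding khom_def by blast
qed

lemma split_mono_iff:
  assumes e: "(e::'a::monoid_mult) * e = e" and h: "e' * h = h"
  shows "split_mono e e' h \<longleftrightarrow> (\<exists>r. r * h = e)"
proof
  assume "\<exists>r. r * h = e"
  then obtain r where r: "r * h = e" by blast
  have "(e * r * e') * h = e" using r h e by (metis mult.assoc)
  moreover have "e * r * e' \<in> khom e' e" unfolding khom_def by blast
  ultimately show "split_mono e e' h" unfolding split_mono_def by blast
qed (auto simp: split_mono_def)

lemma split_epi_iff:
  assumes f: "(f::'a::monoid_mult) * f = f" and g: "g * e' = g"
  shows "split_epi e' f g \<longleftrightarrow> (\<exists>s. g * s = f)"
proof
  assume "\<exists>s. g * s = f"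
  then obtain s where s: "g * s = f" by blast
  have "g * (e' * s * f) = f" using s g f by (metis mult.assoc)
  moreover have "e' * s * f \<in> khom f e'" unfolding khom_def by blast
  ultimately show "split_epi e' f g" unfolding split_epi_def by blast
qed (auto simp: split_epi_def)

lemma split_mono_two_ideal_subset:
  assumes "split_mono e f (m::'a::monoid_mult)"
  shows "two_ideal e \<subseteq> two_ideal f"
proof -
  obtain x where "(e * x * f) * m = e" using assms unfolding split_mono_def khom_def by blast
  then have "e = (e * x) * f * m" by (simp add: mult.assoc)
  then show ?thesis unfolding two_ideal_subset_iff mem_two_ideal_iff by blast
qed

lemma split_epi_two_ideal_subset:
  assumes "split_epi e f (m::'a::monoid_mult)"
  shows "two_ideal f \<subseteq> two_ideal e"
proof -
  obtain x where "m * (e * x * f) = f" using assms unfolding split_epi_def khom_def by blast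
  then have "f = m * e * (x * f)" by (simp add: mult.assoc)
  then show ?thesis unfolding two_ideal_subset_iff mem_two_ideal_iff by blast
qed

lemma khom_comp:
  assumes "g \<in> khom e' f" and "h \<in> khom e e'"
  shows "g * h \<in> khom e f"
proof -
  obtain x y where "g = f * x * e'" and "h = e' * y * e" using assms unfolding khom_def by blast
  then have "g * h = f * (x * e' * e' * y) * e" by (simp add: mult.assoc)
  then show ?thesis unfolding khom_def by blast
qed

lemma AIrr_subset_khom: "AIrr e f \<subseteq> khom e f"
  unfolding AIrr_def by blast

lemma local_monoid_dedekind_finite:
  fixes e x y :: "'a::{monoid_mult,finite}"
  assumes e: "e * e = e" and x: "x \<in> khom e e" and y: "y \<in> khom e e" and xy: "x * y = e"
  shows "y * x = e"
proof -
  have hom: "z \<in> khom e e \<longleftrightarrow> e * z = z \<and> z * e = z" for z using khom_iff[OF e e] .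
  have cancel: "x * (y * z) = z" if "z \<in> khom e e" for z
    using that by (simp add: mult.assoc[symmetric] xy hom)
  have "inj_on ((*) y) (khom e e)"
    by (rule inj_onI) (metis cancel)
  moreover have "(*) y ` khom e e \<subseteq> khom e e" using khom_comp[OF y] by blast
  ultimately have "(*) y ` khom e e = khom e e"
    by (intro endo_inj_surj) auto
  moreover have "e \<in> khom e e" using hom e by simp
  ultimately obtain z where z: "z \<in> khom e e" "y * z = e" by (metis imageE)
  have "x = x * (y * z)" using z x hom by simp
  also have "\<dots> = z" using cancel[OF z(1)] .
  finally show ?thesis using z by simp
qed

lemma finite_unit_groupI:
  fixes e x a b :: "'a::{monoid_mult,finite}"
  assumes e: "e * e = e" and x: "x \<in> khom e e" and axb: "a * x * b = e"
  shows "x \<in> unit_group e"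
proof -
  note hom = khom_iff[OF e e]
  define a' where "a' = e * a * e"
  define b' where "b' = e * b * e"
  have a': "a' \<in> khom e e" and b': "b' \<in> khom e e"
    unfolding a'_def b'_def khom_def by blast+
  have "a' * x * b' = e * (a * (e * x * e) * b) * e"
    by (simp add: a'_def b'_def mult.assoc)
  also have "\<dots> = e" using x hom axb e by (simp add: mult.assoc)
  finally have a'xb': "a' * x * b' = e" .
  have "(x * b') * a' = e"
    by (rule local_monoid_dedekind_finite[OF e a' khom_comp[OF x b']])
      (use a'xb' in \<open>simp add: mult.assoc\<close>)
  moreover have "b' * (a' * x) = e"
    by (rule local_monoid_dedekind_finite[OF e khom_comp[OF a' x] b']) (simp add: a'xb')
  moreover have "b' * a' \<in> khom e e" using khom_comp[OF b' a'] .
  ultimately show ?thesis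
    unfolding unit_group_def using x by (auto simp: mult.assoc)
qed

lemma idempotent_in_unit_group:
  assumes e: "(e::'a::monoid_mult) * e = e" and g: "g * g = g" and "g \<in> unit_group e"
  shows "g = e"
proof -
  obtain v where "g \<in> khom e e" and gv: "g * v = e" using assms(3) unfolding unit_group_def by blast
  then have "g = g * e" using khom_iff[OF e e] by simp
  also have "\<dots> = (g * g) * v" by (simp add: gv mult.assoc)
  also have "\<dots> = e" by (simp add: g gv)
  finally show ?thesis .
qed

lemma unit_group_eq_left_ideal:
  fixes e :: "'a::{monoid_mult,finite}"
  assumes e: "e * e = e"
  shows "unit_group e = {m \<in> khom e e. left_ideal m = left_ideal e}"
proof (intro equalityI subsetI)
  fix m assume "m \<in> unit_group e"
  then obtain v where m: "m \<in> khom e e" and "v * m = e" unfolding unit_group_def by blast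
  moreover have "m * e = m" using m khom_iff[OF e e] by simp
  ultimately show "m \<in> {m \<in> khom e e. left_ideal m = left_ideal e}"
    using left_ideal_eq_iff[OF e] by blast
next
  fix m assume "m \<in> {m \<in> khom e e. left_ideal m = left_ideal e}"
  then obtain r where m: "m \<in> khom e e" and "r * m = e" using left_ideal_eq_iff[OF e] by blast
  then have "r * m * 1 = e" by simp
  then show "m \<in> unit_group e" by (rule finite_unit_groupI[OF e m])
qed

lemma rectangularD:
  assumes "rectangular TYPE('a::monoid_mult)"
    and "(g::'a) \<in> idems" and "h \<in> idems" and "two_ideal h = two_ideal g"
  shows "g * h \<in> idems \<and> two_ideal (g * h) = two_ideal g"
  using assms unfolding rectangular_def by blast

text \<open>The idempotent \<open>\<epsilon> = b d a c b\<close> lies in \<open>bMb\<close> and in the \<open>\<J>\<close>-class of \<open>a\<close>; by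
  rectangularity so does \<open>a \<epsilon> a \<in> aMa\<close>, which is then a unit of \<open>aMa\<close> and hence equals \<open>a\<close>.\<close>

lemma rectangular_idempotent_factor:
  fixes a b :: "'a::{monoid_mult,finite}"
  assumes R: "rectangular TYPE('a)" and a: "a * a = a" and b: "b * b = b"
    and ab: "a \<in> two_ideal b"
  shows "\<exists>c. a = a * b * c * b * a"
proof -
  obtain c d where cd: "a = c * b * d" using ab by (auto simp: mem_two_ideal_iff)
  define \<epsilon> where "\<epsilon> = b * d * a * c * b"
  have cbd: "c * (b * (d * z)) = a * z" for z by (simp add: cd mult.assoc)
  have aa: "a * (a * z) = a * z" and bb: "b * (b * z) = b * z" for z
    by (simp_all add: mult.assoc[symmetric] a b)
  have a_idem: "a \<in> idems" using a by (simp add: idems_def)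
  have \<epsilon>_idem: "\<epsilon> \<in> idems"
    by (simp add: idems_def \<epsilon>_def mult.assoc bb cbd aa)
  have "\<epsilon> \<in> two_ideal a"
    unfolding mem_two_ideal_iff \<epsilon>_def
    by (intro exI[of _ "b * d"] exI[of _ "c * b"]) (simp add: mult.assoc)
  moreover have "a = (a * c) * \<epsilon> * (d * a)"
    by (simp add: \<epsilon>_def mult.assoc cbd aa a)
  then have "a \<in> two_ideal \<epsilon>" unfolding mem_two_ideal_iff by blast
  ultimately have \<epsilon>_J: "two_ideal \<epsilon> = two_ideal a"
    unfolding two_ideal_subset_iff[symmetric] by blast
  obtain a\<epsilon>: "a * \<epsilon> \<in> idems" "two_ideal (a * \<epsilon>) = two_ideal a"
    using rectangularD[OF R a_idem \<epsilon>_idem \<epsilon>_J] by blast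
  then have "a * \<epsilon> * a \<in> idems" "two_ideal (a * \<epsilon> * a) = two_ideal a"
    using rectangularD[OF R a\<epsilon>(1) a_idem] by simp_all
  then have idem: "(a * \<epsilon> * a) * (a * \<epsilon> * a) = a * \<epsilon> * a"
    and "a \<in> two_ideal (a * \<epsilon> * a)"
    unfolding idems_def two_ideal_subset_iff[symmetric] by auto
  then obtain c' d' where "a = c' * (a * \<epsilon> * a) * d'" unfolding mem_two_ideal_iff by blast
  moreover have "a * \<epsilon> * a \<in> khom a a" unfolding khom_def by blast
  ultimately have "a * \<epsilon> * a \<in> unit_group a" using finite_unit_groupI[OF a] by (metis sym)
  then have "a * \<epsilon> * a = a" by (rule idempotent_in_unit_group[OF a idem])
  then have "a = a * b * (d * a * c) * b * a" by (simp add: \<epsilon>_def mult.assoc)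
  then show ?thesis ..
qed

lemma left_ideal_eq_imp_AIrr:
  assumes e: "(e::'a::monoid_mult) * e = e"
    and m: "m \<in> khom e f" and lm: "left_ideal m = left_ideal e"
  shows "m \<in> AIrr e f"
  unfolding AIrr_def
proof (intro CollectI conjI ballI impI m)
  fix e' h g assume e': "e' \<in> idems" and h: "h \<in> khom e e'" and "g \<in> khom e' f" and mgh: "m = g * h"
  obtain w where "w * m = e" using lm left_ideal_eq_iff[OF e] by blast
  then have "(w * g) * h = e" by (simp add: mgh mult.assoc)
  moreover have "e' * h = h" using h e' khom_iff[OF e] by (simp add: idems_def)
  ultimately show "split_mono e e' h \<or> split_epi e' f g" using split_mono_iff[OF e] by blast
qed

lemma right_ideal_eq_imp_AIrr:
  assumes f: "(f::'a::monoid_mult) * f = f"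
    and m: "m \<in> khom e f" and rm: "right_ideal m = right_ideal f"
  shows "m \<in> AIrr e f"
  unfolding AIrr_def
proof (intro CollectI conjI ballI impI m)
  fix e' h g assume e': "e' \<in> idems" and "h \<in> khom e e'" and g: "g \<in> khom e' f" and mgh: "m = g * h"
  obtain w where "m * w = f" using rm right_ideal_eq_iff[OF f] by blast
  then have "g * (h * w) = f" by (simp add: mgh mult.assoc)
  moreover have "g * e' = g" using g e' khom_iff[OF _ f] by (simp add: idems_def)
  ultimately show "split_mono e e' h \<or> split_epi e' f g" using split_epi_iff[OF f] by blast
qed

lemma AIrr_factorization_from_split_epi_prefix:
  fixes e f m :: "'a::monoid_mult"
  assumes e: "e * e = e" and f: "f * f = f" and mA: "m \<in> AIrr e f"
    and "\<forall>x\<in>set xs. regular x"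
    and "f * w = w" and "w * s = f" and "m = w * prod_list xs * e"
  shows "\<exists>b a. m = b * a \<and> f * b = b \<and> (\<exists>s. b * s = f) \<and> a * e = a \<and> (\<exists>r. r * a = e)"
  using assms(4-)
proof (induction xs arbitrary: w s)
  case Nil
  then show ?case using e by (intro exI[of _ w] exI[of _ e]) auto
next
  case (Cons x xs)
  obtain y where xyx: "x * y * x = x"
    using Cons.prems(1) unfolding regular_def by (metis list.set_intros(1))
  define e' where "e' = x * y"
  define h where "h = x * prod_list xs * e"
  define g where "g = w * x * y"
  have xyx_z: "x * (y * (x * z)) = x * z" for z by (simp add: mult.assoc[symmetric] xyx)
  have e'e': "e' * e' = e'" unfolding e'_def by (simp add: mult.assoc xyx_z)
  have eh: "e' * h = h" unfolding e'_def h_def by (simp add: mult.assoc xyx_z)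
  have he: "h * e = h" unfolding h_def by (simp add: mult.assoc e)
  have ge: "g * e' = g" unfolding g_def e'_def by (simp add: mult.assoc xyx_z)
  have fg: "f * g = g" unfolding g_def using Cons.prems(2) by (simp add: mult.assoc[symmetric])
  have mwh: "m = w * h" unfolding h_def using Cons.prems(4) by (simp add: mult.assoc)
  then have mgh: "m = g * h" unfolding g_def h_def by (simp add: mult.assoc xyx_z)
  have "h \<in> khom e e'" using khom_iff[OF e e'e'] eh he by blast
  moreover have "g \<in> khom e' f" using khom_iff[OF e'e' f] ge fg by blast
  ultimately have "split_mono e e' h \<or> split_epi e' f g"
    using mA e'e' mgh unfolding AIrr_def idems_def by blast
  then show ?case
  proof
    assume "split_mono e e' h"
    then obtain r where "r * h = e" using split_mono_iff[OF e eh] by blast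
    then show ?case using mwh Cons.prems(2,3) he by blast
  next
    assume "split_epi e' f g"
    then obtain s' where "g * s' = f" using split_epi_iff[OF f ge] by blast
    then have "(w * x) * (y * s') = f" by (simp add: g_def mult.assoc)
    moreover have "f * (w * x) = w * x" using Cons.prems(2) by (simp add: mult.assoc[symmetric])
    moreover have "m = (w * x) * prod_list xs * e" using Cons.prems(4) by (simp add: mult.assoc)
    ultimately show ?case using Cons.IH Cons.prems(1) by auto
  qed
qed

lemma AIrr_factorization:
  fixes e f m :: "'a::monoid_mult"
  assumes "generated_by_regular TYPE('a)" and e: "e * e = e" and f: "f * f = f"
    and mA: "m \<in> AIrr e f"
  shows "\<exists>a b. m = b * a \<and> left_ideal a = left_ideal e \<and> right_ideal b = right_ideal f"
proof -
  obtain xs where "\<forall>x\<in>set xs. regular x" and xs: "m = prod_list xs"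
    using assms(1) unfolding generated_by_regular_def by blast
  moreover have "m \<in> khom e f" using mA AIrr_subset_khom by blast
  then have "m = f * prod_list xs * e" using xs khom_iff[OF e f] by simp
  ultimately obtain b a where "m = b * a" "f * b = b" "\<exists>s. b * s = f" "a * e = a" "\<exists>r. r * a = e"
    using AIrr_factorization_from_split_epi_prefix[OF e f mA] f by blast
  then show ?thesis using left_ideal_eq_iff[OF e] right_ideal_eq_iff[OF f] by blast
qed

lemma AIrr_eq_Irr_if_incomparable:
  assumes "\<not> two_ideal e \<subseteq> two_ideal f" and "\<not> two_ideal f \<subseteq> two_ideal (e::'a::monoid_mult)"
  shows "AIrr e f = Irr e f"
  using assms split_mono_two_ideal_subset split_epi_two_ideal_subset unfolding Irr_def by blast

lemma AIrr_left_ideal_eq: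
  fixes e f :: "'a::{monoid_mult,finite}"
  assumes R: "rectangular TYPE('a)" and gen: "generated_by_regular TYPE('a)"
    and e: "e * e = e" and f: "f * f = f" and ef: "two_ideal e \<subseteq> two_ideal f"
    and mA: "m \<in> AIrr e f"
  shows "left_ideal m = left_ideal e"
proof -
  obtain a b where m: "m = b * a" and "left_ideal a = left_ideal e" "right_ideal b = right_ideal f"
    using AIrr_factorization[OF gen e f mA] by blast
  then obtain r s where ae: "a * e = a" and ra: "r * a = e" and fb: "f * b = b" and bs: "b * s = f"
    using left_ideal_eq_iff[OF e] right_ideal_eq_iff[OF f] by blast
  define p where "p = s * b"
  define q where "q = a * r"
  have p: "p * p = p" unfolding p_def by (metis mult.assoc bs fb)
  have q: "q * q = q" unfolding q_def by (metis mult.assoc ra ae)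
  have qa: "q * a = a" unfolding q_def by (metis mult.assoc ra ae)
  have "f = b * p * s" unfolding p_def by (metis mult.assoc bs fb)
  then have "two_ideal f \<subseteq> two_ideal p" unfolding two_ideal_subset_iff mem_two_ideal_iff by blast
  moreover have "q = a * e * r" using ae by (simp add: q_def)
  then have "two_ideal q \<subseteq> two_ideal e" unfolding two_ideal_subset_iff mem_two_ideal_iff by blast
  ultimately have "q \<in> two_ideal p" using ef two_ideal_subset_iff by blast
  then obtain c where c: "q * p * c * p * q = q" using rectangular_idempotent_factor[OF R q p] by metis
  have "(r * q * p * c * s) * m = r * (q * p * c * p * q) * a"
    by (simp add: m p_def qa mult.assoc)
  also have "\<dots> = e" by (simp only: c) (simp add: mult.assoc qa ra)
  finally have "(r * q * p * c * s) * m = e" .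
  moreover have "m * e = m" using m ae by (simp add: mult.assoc)
  ultimately show ?thesis using left_ideal_eq_iff[OF e] by blast
qed

lemma AIrr_right_ideal_eq:
  fixes e f :: "'a::{monoid_mult,finite}"
  assumes R: "rectangular TYPE('a)" and gen: "generated_by_regular TYPE('a)"
    and e: "e * e = e" and f: "f * f = f" and fe: "two_ideal f \<subseteq> two_ideal e"
    and mA: "m \<in> AIrr e f"
  shows "right_ideal m = right_ideal f"
proof -
  obtain a b where m: "m = b * a" and "left_ideal a = left_ideal e" "right_ideal b = right_ideal f"
    using AIrr_factorization[OF gen e f mA] by blast
  then obtain r s where ae: "a * e = a" and ra: "r * a = e" and fb: "f * b = b" and bs: "b * s = f"
    using left_ideal_eq_iff[OF e] right_ideal_eq_iff[OF f] by blast
  define p where "p = s * b"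
  define q where "q = a * r"
  have p: "p * p = p" unfolding p_def by (metis mult.assoc bs fb)
  have q: "q * q = q" unfolding q_def by (metis mult.assoc ra ae)
  have bp: "b * p = b" unfolding p_def by (metis mult.assoc bs fb)
  have "e = r * q * a" unfolding q_def by (metis mult.assoc ra ae)
  then have "two_ideal e \<subseteq> two_ideal q" unfolding two_ideal_subset_iff mem_two_ideal_iff by blast
  moreover have "p = s * f * b" using fb by (simp add: p_def mult.assoc)
  then have "two_ideal p \<subseteq> two_ideal f" unfolding two_ideal_subset_iff mem_two_ideal_iff by blast
  ultimately have "p \<in> two_ideal q" using fe two_ideal_subset_iff by blast
  then obtain c where c: "p * q * c * q * p = p" using rectangular_idempotent_factor[OF R p q] by metis
  have "m * (r * c * q * p * s) = (b * p) * (q * c * q * p) * s"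
    by (simp add: m q_def bp mult.assoc)
  also have "\<dots> = b * (p * q * c * q * p) * s" by (simp add: mult.assoc)
  also have "\<dots> = f" by (simp only: c) (simp add: bp bs)
  finally have "m * (r * c * q * p * s) = f" .
  moreover have "f * m = m" using m fb by (simp add: mult.assoc[symmetric])
  ultimately show ?thesis using right_ideal_eq_iff[OF f] by blast
qed

lemma AIrr_eq_of_two_ideal_subset:
  fixes e f :: "'a::{monoid_mult,finite}"
  assumes "rectangular TYPE('a)" and "generated_by_regular TYPE('a)"
    and e: "e * e = e" and "f * f = f" and "two_ideal e \<subseteq> two_ideal f"
  shows "AIrr e f = {m \<in> khom e f. left_ideal m = left_ideal e}"
  using AIrr_left_ideal_eq[OF assms] left_ideal_eq_imp_AIrr[OF e] AIrr_subset_khom by blast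

lemma AIrr_eq_of_two_ideal_superset:
  fixes e f :: "'a::{monoid_mult,finite}"
  assumes "rectangular TYPE('a)" and "generated_by_regular TYPE('a)"
    and "e * e = e" and f: "f * f = f" and "two_ideal f \<subseteq> two_ideal e"
  shows "AIrr e f = {m \<in> khom e f. right_ideal m = right_ideal f}"
  using AIrr_right_ideal_eq[OF assms] right_ideal_eq_imp_AIrr[OF f] AIrr_subset_khom by blast

theorem mainTheorem18:
  fixes e f :: "'a::{monoid_mult, finite}"
  assumes "rectangular TYPE('a)"
    and "generated_by_regular TYPE('a)"
    and "e \<in> idems" and "f \<in> idems"
  shows "(\<not> two_ideal e \<subseteq> two_ideal f \<and> \<not> two_ideal f \<subseteq> two_ideal e \<longrightarrow>
           AIrr e f = Irr e f \<and>
           (\<forall>m\<in>AIrr e f. \<exists>a b. m = b * a \<and> left_ideal a = left_ideal e \<and> right_ideal b = right_ideal f))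
       \<and> (two_ideal e \<subset> two_ideal f \<longrightarrow> AIrr e f = {m \<in> khom e f. left_ideal m = left_ideal e})
       \<and> (two_ideal f \<subset> two_ideal e \<longrightarrow> AIrr e f = {m \<in> khom e f. right_ideal m = right_ideal f})
       \<and> AIrr e e = unit_group e"
proof (intro conjI impI ballI)
  have e: "e * e = e" and f: "f * f = f" using assms(3,4) unfolding idems_def by auto
  note R = assms(1) and gen = assms(2)
  show "AIrr e f = Irr e f" if "\<not> two_ideal e \<subseteq> two_ideal f \<and> \<not> two_ideal f \<subseteq> two_ideal e"
    using AIrr_eq_Irr_if_incomparable that by blast
  show "\<exists>a b. m = b * a \<and> left_ideal a = left_ideal e \<and> right_ideal b = right_ideal f"
    if "m \<in> AIrr e f" for m
    by (rule AIrr_factorization[OF gen e f that])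
  show "AIrr e f = {m \<in> khom e f. left_ideal m = left_ideal e}" if "two_ideal e \<subset> two_ideal f"
    using AIrr_eq_of_two_ideal_subset[OF R gen e f] that by blast
  show "AIrr e f = {m \<in> khom e f. right_ideal m = right_ideal f}" if "two_ideal f \<subset> two_ideal e"
    using AIrr_eq_of_two_ideal_superset[OF R gen e f] that by blast
  show "AIrr e e = unit_group e"
    using AIrr_eq_of_two_ideal_subset[OF R gen e e] unit_group_eq_left_ideal[OF e] by simp
qed

end
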